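(* Let $Q$ be a commutative A-loop. For $n\ge 0$ let $H_n(Q)=\{x\in Q : x^{2^n}=1\}$ and $H(Q)=\bigcup_{n\ge 0}H_n(Q)$. Then: (i) $H_{n+1}(Q)=\{x\in Q : x^2\in H_n(Q)\}$ for every $n\ge 0$; (ii) $H_{n+1}(Q)\supseteq H_n(Q)$ for every $n\ge 0$; (iii) $H_n(Q)$ is a normal subloop of $Q$ for every $n\ge 0$; (iv) $H(Q)$ is a normal subloop of $Q$.
   Context: A loop is a set with a binary operation and neutral element $1$ in which all left and right translations are bijections; $\mathrm{Inn}(Q)$ is the stabilizer of $1$ in the group generated by all translations. A commutative A-loop is a commutative loop all of whose inner mappings are automorphisms. Such loops are power-associative, so powers are unambiguous. A normal subloop is a subloop invariant under all inner mappings. *)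

theory Defs
  imports Main
begin

definition loop :: "'a set \<Rightarrow> ('a \<Rightarrow> 'a \<Rightarrow> 'a) \<Rightarrow> 'a \<Rightarrow> bool" where
  "loop Q m e \<longleftrightarrow> e \<in> Q \<and> (\<forall>x\<in>Q. \<forall>y\<in>Q. m x y \<in> Q)
     \<and> (\<forall>x\<in>Q. m e x = x \<and> m x e = x)
     \<and> (\<forall>x\<in>Q. bij_betw (m x) Q Q \<and> bij_betw (\<lambda>y. m y x) Q Q)"

text \<open>Left and right translations, extended by the identity outside the carrier
  (so that they are permutations of the whole type).\<close>

definition Ltr :: "'a set \<Rightarrow> ('a \<Rightarrow> 'a \<Rightarrow> 'a) \<Rightarrow> 'a \<Rightarrow> 'a \<Rightarrow> 'a" where
  "Ltr Q m x = (\<lambda>y. if y \<in> Q then m x y else y)"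

definition Rtr :: "'a set \<Rightarrow> ('a \<Rightarrow> 'a \<Rightarrow> 'a) \<Rightarrow> 'a \<Rightarrow> 'a \<Rightarrow> 'a" where
  "Rtr Q m x = (\<lambda>y. if y \<in> Q then m y x else y)"

inductive_set Mlt :: "'a set \<Rightarrow> ('a \<Rightarrow> 'a \<Rightarrow> 'a) \<Rightarrow> ('a \<Rightarrow> 'a) set"
  for Q m where
  Mlt_id: "id \<in> Mlt Q m"
| Mlt_L: "x \<in> Q \<Longrightarrow> Ltr Q m x \<in> Mlt Q m"
| Mlt_R: "x \<in> Q \<Longrightarrow> Rtr Q m x \<in> Mlt Q m"
| Mlt_comp: "f \<in> Mlt Q m \<Longrightarrow> g \<in> Mlt Q m \<Longrightarrow> f \<circ> g \<in> Mlt Q m"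
| Mlt_inv: "f \<in> Mlt Q m \<Longrightarrow> inv f \<in> Mlt Q m"

definition Inn :: "'a set \<Rightarrow> ('a \<Rightarrow> 'a \<Rightarrow> 'a) \<Rightarrow> 'a \<Rightarrow> ('a \<Rightarrow> 'a) set" where
  "Inn Q m e = {f \<in> Mlt Q m. f e = e}"

definition comm_A_loop :: "'a set \<Rightarrow> ('a \<Rightarrow> 'a \<Rightarrow> 'a) \<Rightarrow> 'a \<Rightarrow> bool" where
  "comm_A_loop Q m e \<longleftrightarrow> loop Q m e
     \<and> (\<forall>x\<in>Q. \<forall>y\<in>Q. m x y = m y x)
     \<and> (\<forall>f\<in>Inn Q m e. \<forall>x\<in>Q. \<forall>y\<in>Q. f (m x y) = m (f x) (f y))"

text \<open>Powers (unambiguous in power-associative loops).\<close>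

primrec lpow :: "('a \<Rightarrow> 'a \<Rightarrow> 'a) \<Rightarrow> 'a \<Rightarrow> 'a \<Rightarrow> nat \<Rightarrow> 'a" where
  "lpow m e x 0 = e"
| "lpow m e x (Suc n) = m x (lpow m e x n)"

definition subloop :: "'a set \<Rightarrow> 'a set \<Rightarrow> ('a \<Rightarrow> 'a \<Rightarrow> 'a) \<Rightarrow> 'a \<Rightarrow> bool" where
  "subloop S Q m e \<longleftrightarrow> S \<subseteq> Q \<and> e \<in> S \<and> (\<forall>x\<in>S. \<forall>y\<in>S. m x y \<in> S)
     \<and> (\<forall>a\<in>S. \<forall>b\<in>S. \<forall>x\<in>Q. m a x = b \<longrightarrow> x \<in> S)
     \<and> (\<forall>a\<in>S. \<forall>b\<in>S. \<forall>y\<in>Q. m y a = b \<longrightarrow> y \<in> S)"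

definition normal_subloop :: "'a set \<Rightarrow> 'a set \<Rightarrow> ('a \<Rightarrow> 'a \<Rightarrow> 'a) \<Rightarrow> 'a \<Rightarrow> bool" where
  "normal_subloop S Q m e \<longleftrightarrow> subloop S Q m e \<and> (\<forall>f\<in>Inn Q m e. f ` S \<subseteq> S)"

definition Hn :: "'a set \<Rightarrow> ('a \<Rightarrow> 'a \<Rightarrow> 'a) \<Rightarrow> 'a \<Rightarrow> nat \<Rightarrow> 'a set" where
  "Hn Q m e n = {x \<in> Q. lpow m e x (2 ^ n) = e}"

definition Hall :: "'a set \<Rightarrow> ('a \<Rightarrow> 'a \<Rightarrow> 'a) \<Rightarrow> 'a \<Rightarrow> 'a set" where
  "Hall Q m e = (\<Union>n. Hn Q m e n)"

end

theory Submission
  imports Defs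
begin

(* By power-associativity x^(2^(n+1)) = (x^2)^(2^n), which gives (i) and (ii); (iv) holds
   because the union of an increasing chain of normal subloops is a normal subloop.
   For (iii) it suffices, by induction, that {x. x^2 \<in> N} is a normal subloop whenever N is.
   Inner mappings are automorphisms, and one that fixes an element commutes with its left
   translation; applied to suitable L_{x,y} this yields the automorphic inverse property
   (xy)^-1 = x^-1 y^-1 and x^-1 \ x = x^2. So x^2 \<in> N says that x^-1 and x are congruent
   modulo N (x \ y \<in> N), and that property survives products and left quotients. *)

lemma normal_subloop_singleton:
  assumes "loop Q m e"
  shows "normal_subloop {e} Q m e"
  using assms by (auto simp: normal_subloop_def subloop_def loop_def Inn_def)

lemma normal_subloop_UN_mono:
  fixes S :: "nat \<Rightarrow> 'a set"
  assumes normal: "\<And>n. normal_subloop (S n) Q m e" and "mono S"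
  shows "normal_subloop (\<Union>n. S n) Q m e"
proof -
  have common: "\<exists>n. a \<in> S n \<and> b \<in> S n" if "a \<in> (\<Union>n. S n)" "b \<in> (\<Union>n. S n)" for a b
  proof -
    from that obtain i j where "a \<in> S i" "b \<in> S j" by blast
    moreover have "S i \<subseteq> S (max i j)" "S j \<subseteq> S (max i j)"
      by (rule monoD[OF \<open>mono S\<close>], simp)+
    ultimately show ?thesis by blast
  qed
  have sub: "subloop (S n) Q m e" for n
    using normal by (simp add: normal_subloop_def)
  have "subloop (\<Union>n. S n) Q m e"
    unfolding subloop_def
  proof (intro conjI ballI impI)
    show "(\<Union>n. S n) \<subseteq> Q"
      using sub unfolding subloop_def by blast
    show "e \<in> (\<Union>n. S n)"
      using sub[of 0] unfolding subloop_def by blast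
  next
    fix a b assume "a \<in> (\<Union>n. S n)" "b \<in> (\<Union>n. S n)"
    then obtain n where "a \<in> S n" "b \<in> S n" using common by blast
    with sub[of n] have "m a b \<in> S n"
      and "\<And>x. x \<in> Q \<Longrightarrow> m a x = b \<Longrightarrow> x \<in> S n"
      and "\<And>y. y \<in> Q \<Longrightarrow> m y a = b \<Longrightarrow> y \<in> S n"
      unfolding subloop_def by blast+
    then show "m a b \<in> (\<Union>n. S n)"
      and "\<And>x. x \<in> Q \<Longrightarrow> m a x = b \<Longrightarrow> x \<in> (\<Union>n. S n)"
      and "\<And>y. y \<in> Q \<Longrightarrow> m y a = b \<Longrightarrow> y \<in> (\<Union>n. S n)"
      by blast+
  qed
  moreover have "f ` (\<Union>n. S n) \<subseteq> (\<Union>n. S n)" if "f \<in> Inn Q m e" for f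
  proof -
    have "f ` S n \<subseteq> S n" for n
      using normal that by (simp add: normal_subloop_def)
    then show ?thesis by blast
  qed
  ultimately show ?thesis
    by (simp add: normal_subloop_def)
qed

locale commutative_A_loop =
  fixes Q :: "'a set" and m :: "'a \<Rightarrow> 'a \<Rightarrow> 'a" and e :: 'a
  assumes comm_A_loop: "comm_A_loop Q m e"
begin

lemma loop: "loop Q m e"
  using comm_A_loop by (simp add: comm_A_loop_def)

lemma unit_closed [simp]: "e \<in> Q"
  and mult_closed [simp]: "x \<in> Q \<Longrightarrow> y \<in> Q \<Longrightarrow> m x y \<in> Q"
  and mult_unit_left [simp]: "x \<in> Q \<Longrightarrow> m e x = x"
  and mult_unit_right [simp]: "x \<in> Q \<Longrightarrow> m x e = x"
  and bij_mult_left: "x \<in> Q \<Longrightarrow> bij_betw (m x) Q Q"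
  using loop by (simp_all add: loop_def)

lemma mult_commute: "x \<in> Q \<Longrightarrow> y \<in> Q \<Longrightarrow> m x y = m y x"
  using comm_A_loop by (simp add: comm_A_loop_def)

lemma Inn_mult: "f \<in> Inn Q m e \<Longrightarrow> x \<in> Q \<Longrightarrow> y \<in> Q \<Longrightarrow> f (m x y) = m (f x) (f y)"
  using comm_A_loop by (simp add: comm_A_loop_def)

lemma Inn_unit: "f \<in> Inn Q m e \<Longrightarrow> f e = e"
  by (simp add: Inn_def)

definition ldiv :: "'a \<Rightarrow> 'a \<Rightarrow> 'a" where
  "ldiv x = inv_into Q (m x)"

abbreviation linv :: "'a \<Rightarrow> 'a" where
  "linv x \<equiv> ldiv x e"

lemma ldiv_closed [simp]: "x \<in> Q \<Longrightarrow> y \<in> Q \<Longrightarrow> ldiv x y \<in> Q"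
  and mult_ldiv [simp]: "x \<in> Q \<Longrightarrow> y \<in> Q \<Longrightarrow> m x (ldiv x y) = y"
  and ldiv_mult [simp]: "x \<in> Q \<Longrightarrow> y \<in> Q \<Longrightarrow> ldiv x (m x y) = y"
  using bij_mult_left[of x] unfolding ldiv_def bij_betw_def
  by (auto intro: inv_into_into f_inv_into_f inv_into_f_f)

lemma ldiv_unique: "x \<in> Q \<Longrightarrow> z \<in> Q \<Longrightarrow> m x z = y \<Longrightarrow> ldiv x y = z"
  by auto

lemma ldiv_self [simp]: "x \<in> Q \<Longrightarrow> ldiv x x = e"
  by (rule ldiv_unique) simp_all

lemma ldiv_unit_left [simp]: "x \<in> Q \<Longrightarrow> ldiv e x = x"
  by (rule ldiv_unique) simp_all

lemma linv_mult [simp]: "x \<in> Q \<Longrightarrow> m (linv x) x = e"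
  using mult_commute[of x "linv x"] by simp

lemma linv_linv [simp]: "x \<in> Q \<Longrightarrow> linv (linv x) = x"
  by (rule ldiv_unique) simp_all

lemma Ltr_apply: "y \<in> Q \<Longrightarrow> Ltr Q m x y = m x y"
  by (simp add: Ltr_def)

lemma Ltr_inverse:
  assumes "x \<in> Q"
  shows "Ltr Q m x \<circ> (\<lambda>y. if y \<in> Q then ldiv x y else y) = id"
    and "(\<lambda>y. if y \<in> Q then ldiv x y else y) \<circ> Ltr Q m x = id"
  using assms by (auto simp: Ltr_def)

lemma bij_Ltr: "x \<in> Q \<Longrightarrow> bij (Ltr Q m x)"
  by (rule o_bij[OF Ltr_inverse(2,1)])

lemma inv_Ltr: "x \<in> Q \<Longrightarrow> y \<in> Q \<Longrightarrow> inv (Ltr Q m x) y = ldiv x y"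
  using inv_unique_comp[OF Ltr_inverse] by simp

lemma Rtr_eq_Ltr: "x \<in> Q \<Longrightarrow> Rtr Q m x = Ltr Q m x"
  by (auto simp: Rtr_def Ltr_def mult_commute)

lemma Mlt_bij_preserves:
  assumes "f \<in> Mlt Q m"
  shows "bij f \<and> (\<forall>z. f z \<in> Q \<longleftrightarrow> z \<in> Q)"
  using assms
proof (induction rule: Mlt.induct)
  case (Mlt_L x)
  then show ?case using bij_Ltr by (auto simp: Ltr_def)
next
  case (Mlt_R x)
  then show ?case using bij_Ltr by (auto simp: Rtr_eq_Ltr Ltr_def)
next
  case (Mlt_inv f)
  then show ?case by (metis bij_imp_bij_inv bij_inv_eq_iff)
next
  case (Mlt_comp f g)
  then show ?case using bij_comp[of g f] by (simp add: comp_def)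
qed (simp add: bij_def)

lemma Inn_closed: "f \<in> Inn Q m e \<Longrightarrow> x \<in> Q \<Longrightarrow> f x \<in> Q"
  using Mlt_bij_preserves by (auto simp: Inn_def)

lemma bij_Inn: "f \<in> Inn Q m e \<Longrightarrow> bij f"
  using Mlt_bij_preserves by (auto simp: Inn_def)

lemma inv_Inn: "f \<in> Inn Q m e \<Longrightarrow> inv f \<in> Inn Q m e"
  by (auto simp: Inn_def Mlt.Mlt_inv bij_is_inj[OF bij_Inn] inv_f_eq)

lemma Inn_ldiv: "f \<in> Inn Q m e \<Longrightarrow> x \<in> Q \<Longrightarrow> y \<in> Q \<Longrightarrow> f (ldiv x y) = ldiv (f x) (f y)"
  by (rule ldiv_unique[symmetric]) (simp_all add: Inn_closed Inn_mult[symmetric])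

lemma Inn_linv: "f \<in> Inn Q m e \<Longrightarrow> x \<in> Q \<Longrightarrow> f (linv x) = linv (f x)"
  by (simp add: Inn_ldiv Inn_unit)

definition left_inner :: "'a \<Rightarrow> 'a \<Rightarrow> 'a \<Rightarrow> 'a" where
  "left_inner x y = inv (Ltr Q m (m x y)) \<circ> Ltr Q m x \<circ> Ltr Q m y"

lemma left_inner_apply:
  "x \<in> Q \<Longrightarrow> y \<in> Q \<Longrightarrow> z \<in> Q \<Longrightarrow> left_inner x y z = ldiv (m x y) (m x (m y z))"
  by (simp add: left_inner_def Ltr_apply inv_Ltr)

lemma left_inner_Inn: "x \<in> Q \<Longrightarrow> y \<in> Q \<Longrightarrow> left_inner x y \<in> Inn Q m e"
  unfolding Inn_def
  by (simp add: left_inner_apply) (auto simp: left_inner_def intro!: Mlt.intros)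

lemma left_inner_inv_apply:
  assumes "x \<in> Q" "y \<in> Q" "z \<in> Q"
  shows "inv (left_inner x y) z = ldiv y (ldiv x (m (m x y) z))"
proof -
  have "left_inner x y (ldiv y (ldiv x (m (m x y) z))) = z"
    using assms by (simp add: left_inner_apply)
  with bij_Inn[OF left_inner_Inn] assms show ?thesis
    by (metis bij_is_inj inv_f_eq)
qed

(* L_{x^-1,x} = L_{x^-1} L_x is an automorphism fixing x^-1, so it commutes with L_{x^-1}. *)

lemma linv_mult_left_commute:
  assumes x: "x \<in> Q" and y: "y \<in> Q"
  shows "m (linv x) (m x y) = m x (m (linv x) y)"
proof -
  let ?f = "left_inner (linv x) x"
  have f: "?f \<in> Inn Q m e"
    using x by (simp add: left_inner_Inn)
  have f_apply: "?f z = m (linv x) (m x z)" if "z \<in> Q" for z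
    using x that by (simp add: left_inner_apply)
  have "m (linv x) (m x (m (linv x) y)) = ?f (m (linv x) y)"
    using x y by (simp add: f_apply)
  also have "\<dots> = m (?f (linv x)) (?f y)"
    using f x y by (simp add: Inn_mult)
  also have "\<dots> = m (linv x) (m (linv x) (m x y))"
    using x y by (simp add: f_apply)
  finally show ?thesis
    using x y by (metis ldiv_mult ldiv_closed mult_closed unit_closed)
qed

(* The automorphism L_{p,a} with p = xz and pa = x maps a^-1 to z and a \ p^-1 to x^-1,
   and it fixes p^-1 = a (a \ p^-1). *)

lemma linv_mult_distrib:
  assumes x: "x \<in> Q" and z: "z \<in> Q"
  shows "linv (m x z) = m (linv x) (linv z)"
proof -
  define p where "p = m x z"
  define a where "a = ldiv p x"
  have p: "p \<in> Q" and a: "a \<in> Q" and pa: "m p a = x"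
    using x z by (simp_all add: p_def a_def)
  let ?f = "left_inner p a"
  have f: "?f \<in> Inn Q m e"
    using p a by (simp add: left_inner_Inn)
  have f_apply: "?f u = ldiv x (m p (m a u))" if "u \<in> Q" for u
    using p a that by (simp add: left_inner_apply pa)
  have "?f (linv a) = ldiv x p"
    using a p by (simp add: f_apply)
  then have "?f (linv a) = z"
    using x z by (simp add: p_def)
  then have fa: "?f a = linv z"
    using f a by (metis Inn_closed Inn_linv linv_linv)
  have f_quot: "?f (ldiv a (linv p)) = linv x"
    using a p by (simp add: f_apply)
  have "?f (linv p) = ldiv x (m p (m (linv p) a))"
    using a p by (simp add: f_apply mult_commute[of a "linv p"])
  also have "\<dots> = ldiv x (m (linv p) x)"
    using a p by (simp add: linv_mult_left_commute[symmetric] pa)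
  also have "\<dots> = linv p"
    using x p by (simp add: mult_commute[of "linv p" x])
  finally have "linv p = ?f (m a (ldiv a (linv p)))"
    using a p by simp
  also have "\<dots> = m (linv z) (linv x)"
    using f a p Inn_mult[of ?f a "ldiv a (linv p)"] by (simp only: fa f_quot ldiv_closed unit_closed)
  finally show ?thesis
    using x z by (simp add: p_def mult_commute)
qed

lemma ldiv_linv_self: "x \<in> Q \<Longrightarrow> ldiv (linv x) x = m x x"
  by (rule ldiv_unique) (simp_all add: linv_mult_left_commute)

lemma lpow_closed [simp]: "x \<in> Q \<Longrightarrow> lpow m e x k \<in> Q"
  by (induction k) simp_all

lemma Inn_lpow: "f \<in> Inn Q m e \<Longrightarrow> x \<in> Q \<Longrightarrow> f (lpow m e x k) = lpow m e (f x) k"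
  by (induction k) (simp_all add: Inn_unit Inn_mult)

lemma Ltr_funpow_Mlt: "x \<in> Q \<Longrightarrow> Ltr Q m x ^^ k \<in> Mlt Q m"
  by (induction k) (simp_all add: Mlt.intros)

lemma Ltr_funpow_lpow: "x \<in> Q \<Longrightarrow> (Ltr Q m x ^^ k) (lpow m e x j) = lpow m e x (k + j)"
  by (induction k) (simp_all add: Ltr_apply)

(* L_p^-1 L_x^k with p = x^k is an inner mapping fixing x, hence it fixes every power of x. *)

lemma lpow_add:
  assumes x: "x \<in> Q"
  shows "m (lpow m e x k) (lpow m e x j) = lpow m e x (k + j)"
proof -
  define p where "p = lpow m e x k"
  have p: "p \<in> Q"
    using x by (simp add: p_def)
  define f where "f = inv (Ltr Q m p) \<circ> (Ltr Q m x ^^ k)"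
  have f_apply: "f (lpow m e x i) = ldiv p (lpow m e x (k + i))" for i
    using x p by (simp add: f_def Ltr_funpow_lpow inv_Ltr)
  have "f e = e"
    using f_apply[of 0] p by (simp add: p_def)
  then have f: "f \<in> Inn Q m e"
    using x p by (simp add: Inn_def f_def Mlt.intros Ltr_funpow_Mlt)
  have "f x = x"
    using f_apply[of 1] x p by (simp add: p_def mult_commute[of x])
  then have "ldiv p (lpow m e x (k + j)) = lpow m e x j"
    using f x by (simp add: Inn_lpow flip: f_apply)
  then show ?thesis
    using x p by (metis lpow_closed mult_ldiv p_def)
qed

lemma lpow_square: "x \<in> Q \<Longrightarrow> lpow m e (m x x) k = lpow m e x (2 * k)"
proof (induction k)
  case (Suc k)
  have "m x x = lpow m e x 2"
    using Suc.prems by (simp add: numeral_2_eq_2)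
  with Suc show ?case
    by (simp add: lpow_add)
qed simp

lemma Hn_0: "Hn Q m e 0 = {e}"
  by (auto simp: Hn_def)

lemma Hn_Suc: "Hn Q m e (Suc n) = {x \<in> Q. m x x \<in> Hn Q m e n}"
  by (auto simp: Hn_def lpow_square)

lemma Hn_subset_Suc: "Hn Q m e n \<subseteq> Hn Q m e (Suc n)"
  by (auto simp: Hn_def lpow_add[symmetric] mult_2)

context
  fixes N :: "'a set"
  assumes N: "normal_subloop N Q m e"
begin

lemma N_subset: "N \<subseteq> Q"
  and unit_in_N: "e \<in> N"
  and mult_in_N: "a \<in> N \<Longrightarrow> b \<in> N \<Longrightarrow> m a b \<in> N"
  and Inn_in_N: "f \<in> Inn Q m e \<Longrightarrow> a \<in> N \<Longrightarrow> f a \<in> N"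
  using N unfolding normal_subloop_def subloop_def by blast+

lemma ldiv_in_N:
  assumes "a \<in> N" "b \<in> N"
  shows "ldiv a b \<in> N"
proof -
  have "a \<in> Q" "b \<in> Q"
    using assms N_subset by auto
  then show ?thesis
    using N assms unfolding normal_subloop_def subloop_def by (meson ldiv_closed mult_ldiv)
qed

lemma left_inner_in_N:
  assumes "x \<in> Q" "y \<in> Q" "a \<in> N"
  shows "ldiv (m x y) (m x (m y a)) \<in> N"
proof -
  have "left_inner x y a \<in> N"
    using assms by (simp add: Inn_in_N left_inner_Inn)
  with assms N_subset show ?thesis
    by (simp add: left_inner_apply subset_iff)
qed

lemma left_inner_inv_in_N:
  assumes "x \<in> Q" "y \<in> Q" "a \<in> N"
  shows "ldiv y (ldiv x (m (m x y) a)) \<in> N"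
proof -
  have "inv (left_inner x y) a \<in> N"
    using assms by (simp add: Inn_in_N inv_Inn left_inner_Inn)
  with assms N_subset show ?thesis
    by (simp add: left_inner_inv_apply subset_iff)
qed

lemma ldiv_in_N_sym:
  assumes x: "x \<in> Q" and y: "y \<in> Q" and xy: "ldiv x y \<in> N"
  shows "ldiv y x \<in> N"
proof -
  define a where "a = ldiv x y"
  have a: "a \<in> N" "a \<in> Q" and y_eq: "y = m x a"
    using x y xy N_subset by (auto simp: a_def)
  have "ldiv (m x a) (m x (m a (linv a))) \<in> N"
    using x a by (intro left_inner_in_N ldiv_in_N unit_in_N) simp_all
  then show ?thesis
    using x a by (simp add: y_eq)
qed

lemma ldiv_in_N_trans:
  assumes x: "x \<in> Q" and y: "y \<in> Q" and z: "z \<in> Q"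
    and xy: "ldiv x y \<in> N" and yz: "ldiv y z \<in> N"
  shows "ldiv x z \<in> N"
proof -
  define a b where "a = ldiv x y" and "b = ldiv y z"
  have a: "a \<in> N" "a \<in> Q" and b: "b \<in> N" "b \<in> Q"
    using x y z xy yz N_subset by (auto simp: a_def b_def)
  have z_eq: "z = m (m x a) b"
    using x y z by (simp add: a_def b_def)
  have "ldiv x z = m a (ldiv a (ldiv x z))"
    using x z a by simp
  moreover have "ldiv a (ldiv x z) \<in> N"
    using x a b by (simp add: z_eq left_inner_inv_in_N)
  ultimately show ?thesis
    using a by (metis mult_in_N)
qed

lemma ldiv_in_N_mult_right:
  assumes x: "x \<in> Q" and y: "y \<in> Q" and z: "z \<in> Q" and xy: "ldiv x y \<in> N"
  shows "ldiv (m x z) (m y z) \<in> N"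
proof -
  define a where "a = ldiv x y"
  have a: "a \<in> N" "a \<in> Q" and y_eq: "y = m x a"
    using x y xy N_subset by (auto simp: a_def)
  have "ldiv (m z x) (m z (m x a)) \<in> N"
    using x z a by (simp add: left_inner_in_N)
  then show ?thesis
    using x z a by (simp add: y_eq mult_commute[of z x] mult_commute[of z "m x a"])
qed

lemma ldiv_in_N_cancel_left:
  assumes a: "a \<in> Q" and y: "y \<in> Q" and z: "z \<in> Q" and ayz: "ldiv (m a y) (m a z) \<in> N"
  shows "ldiv y z \<in> N"
proof -
  define b where "b = ldiv (m a y) (m a z)"
  have b: "b \<in> N" "b \<in> Q"
    using a y z ayz N_subset by (auto simp: b_def)
  have "z = ldiv a (m (m a y) b)"
    using a y z by (simp add: b_def)
  then show ?thesis
    using a y b by (simp add: left_inner_inv_in_N)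
qed

lemma linv_congruent_mult:
  assumes x: "x \<in> Q" "ldiv (linv x) x \<in> N" and y: "y \<in> Q" "ldiv (linv y) y \<in> N"
  shows "ldiv (linv (m x y)) (m x y) \<in> N"
proof -
  have "ldiv (m (linv x) (linv y)) (m x (linv y)) \<in> N"
    using ldiv_in_N_mult_right[of "linv x" x "linv y"] x y by simp
  moreover have "ldiv (m x (linv y)) (m x y) \<in> N"
    using ldiv_in_N_mult_right[of "linv y" y x] x y by (simp add: mult_commute[of x])
  ultimately have "ldiv (m (linv x) (linv y)) (m x y) \<in> N"
    using ldiv_in_N_trans[of "m (linv x) (linv y)" "m x (linv y)" "m x y"] x y by simp
  with x y show ?thesis
    by (simp add: linv_mult_distrib)
qed

lemma linv_congruent_cancel_left:
  assumes x: "x \<in> Q" "ldiv (linv x) x \<in> N" and z: "z \<in> Q"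
    and xz: "ldiv (linv (m x z)) (m x z) \<in> N"
  shows "ldiv (linv z) z \<in> N"
proof -
  have "ldiv (m (linv x) z) (m x z) \<in> N"
    using ldiv_in_N_mult_right[of "linv x" x z] x z by simp
  then have "ldiv (m x z) (m (linv x) z) \<in> N"
    using ldiv_in_N_sym[of "m (linv x) z" "m x z"] x z by simp
  moreover have "ldiv (m (linv x) (linv z)) (m x z) \<in> N"
    using xz x z by (simp add: linv_mult_distrib)
  ultimately have "ldiv (m (linv x) (linv z)) (m (linv x) z) \<in> N"
    using ldiv_in_N_trans[of "m (linv x) (linv z)" "m x z" "m (linv x) z"] x z by simp
  then show ?thesis
    using ldiv_in_N_cancel_left[of "linv x" "linv z" z] x z by simp
qed

lemma normal_subloop_square_preimage: "normal_subloop {x \<in> Q. m x x \<in> N} Q m e"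
proof -
  let ?H = "{x \<in> Q. m x x \<in> N}"
  have H_iff: "x \<in> ?H \<longleftrightarrow> x \<in> Q \<and> ldiv (linv x) x \<in> N" for x
    by (auto simp: ldiv_linv_self)
  have mult: "m x y \<in> ?H" if "x \<in> ?H" "y \<in> ?H" for x y
    using that linv_congruent_mult H_iff by (metis mult_closed)
  have ldiv: "z \<in> ?H" if "x \<in> ?H" "m x z \<in> ?H" "z \<in> Q" for x z
    using that linv_congruent_cancel_left H_iff by blast
  have "subloop ?H Q m e"
    unfolding subloop_def
  proof (intro conjI ballI impI)
    show "?H \<subseteq> Q" "e \<in> ?H"
      by (simp_all add: subset_iff unit_in_N)
    show "m x y \<in> ?H" if "x \<in> ?H" "y \<in> ?H" for x y
      using mult that .
    show "z \<in> ?H" if "x \<in> ?H" "y \<in> ?H" "z \<in> Q" "m x z = y" for x y z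
      using ldiv that by blast
    show "z \<in> ?H" if "x \<in> ?H" "y \<in> ?H" "z \<in> Q" "m z x = y" for x y z
      using ldiv that mult_commute by (metis (no_types, lifting) mem_Collect_eq)
  qed
  moreover have "f x \<in> ?H" if f: "f \<in> Inn Q m e" and x: "x \<in> ?H" for f x
  proof -
    have "f (m x x) \<in> N"
      using f x by (simp add: Inn_in_N)
    with f x show ?thesis
      by (simp add: Inn_closed Inn_mult)
  qed
  ultimately show ?thesis
    by (auto simp: normal_subloop_def)
qed

end

end

theorem theorem5p6:
  fixes Q :: "'a set" and m :: "'a \<Rightarrow> 'a \<Rightarrow> 'a" and e :: 'a
  assumes "comm_A_loop Q m e"
  shows "(\<forall>n. Hn Q m e (Suc n) = {x \<in> Q. m x x \<in> Hn Q m e n})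
       \<and> (\<forall>n. Hn Q m e n \<subseteq> Hn Q m e (Suc n))
       \<and> (\<forall>n. normal_subloop (Hn Q m e n) Q m e)
       \<and> normal_subloop (Hall Q m e) Q m e"
proof -
  interpret commutative_A_loop Q m e
    using assms by unfold_locales
  have normal: "normal_subloop (Hn Q m e n) Q m e" for n
    by (induction n)
      (simp_all add: Hn_0 Hn_Suc loop normal_subloop_singleton normal_subloop_square_preimage)
  moreover have "mono (Hn Q m e)"
    by (simp add: mono_iff_le_Suc Hn_subset_Suc)
  ultimately have "normal_subloop (Hall Q m e) Q m e"
    unfolding Hall_def by (rule normal_subloop_UN_mono)
  with normal Hn_Suc Hn_subset_Suc show ?thesis
    by blast
qed

end
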